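(* Let $\mu$ be a probability measure with bounded support contained in $[0,\infty)$, and let $b=\sup\operatorname{supp}\mu$. For $q\in[0,1]$ and $x>b$ define $$T_2(x;q)=\frac{\varphi_\mu'(x;q)}{\varphi_\mu(x;q)\,\varphi_\mu(x;1)}.$$ Then for every fixed $x>b$ and every $q\in[0,1]$, $$\frac{\partial T_2}{\partial x}(x;q)\ \ge\ \frac{\partial T_2}{\partial x}(x;0).$$
   Context: For $s\in[0,1]$ and $x>b$, set $\varphi_\mu(x;s)=s\int\frac{x}{x^2-t^2}\,d\mu(t)+\frac{1-s}{x}$. Here $\varphi_\mu'(x;s)$ denotes the derivative in $x$, namely $\varphi_\mu'(x;s)=-\big(s\int\frac{x^2+t^2}{(x^2-t^2)^2}\,d\mu(t)+\frac{1-s}{x^2}\big)$. *)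

theory Defs
  imports "HOL-Probability.Probability"
begin

definition measure_support :: "real measure \<Rightarrow> real set" where
  "measure_support M = {t. \<forall>e>0. emeasure M (ball t e) > 0}"

definition phi_mu :: "real measure \<Rightarrow> real \<Rightarrow> real \<Rightarrow> real" where
  "phi_mu M x s = s * (\<integral>t. x / (x\<^sup>2 - t\<^sup>2) \<partial>M) + (1 - s) / x"

text \<open>The explicit x-derivative of phi_mu, as given in the paper.\<close>
definition dphi_mu :: "real measure \<Rightarrow> real \<Rightarrow> real \<Rightarrow> real" where
  "dphi_mu M x s = - (s * (\<integral>t. (x\<^sup>2 + t\<^sup>2) / (x\<^sup>2 - t\<^sup>2)\<^sup>2 \<partial>M) + (1 - s) / x\<^sup>2)"

definition T2 :: "real measure \<Rightarrow> real \<Rightarrow> real \<Rightarrow> real" where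
  "T2 M x q = dphi_mu M x q / (phi_mu M x q * phi_mu M x 1)"

end

theory Submission
  imports Defs
begin

text \<open>Write p(t) = x^2 / (x^2 - t^2), so that 1 \<le> p \<le> x / (x - b) on the support, and
  m_k = \<integral> p^k d\<mu>. Splitting the kernels into partial fractions in x - t and x + t and
  differentiating under the integral sign gives x phi(x;s) = s m_1 + 1 - s,
  -x^2 phi'(x;s) = s (2 m_2 - m_1) + 1 - s and x^3 phi''(x;s) = s (8 m_3 - 6 m_2) + 2 (1 - s), so
  the quotient rule expresses dT2/dx (x;q) through m_1, m_2, m_3 alone. Its difference with the
  value at q = 0 has numerator
  4 q ((1 - q) (2 m_1 m_3 - m_1 m_2 - m_2^2) + q m_1 (2 m_1 m_3 + m_1 m_2 - 2 m_2^2 - m_1^2)),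
  which is nonnegative because 1 \<le> m_1 \<le> m_2 (as p \<ge> 1) and m_2^2 \<le> m_1 m_3 (Cauchy-Schwarz).\<close>

lemma AE_in_measure_support:
  fixes M :: "real measure"
  assumes sets_M: "sets M = sets borel"
  shows "AE t in M. t \<in> measure_support M"
proof -
  define \<F> where "\<F> = {ball s e |s e. emeasure M (ball s e) = 0}"
  obtain \<F>' where sub: "\<F>' \<subseteq> \<F>" and "countable \<F>'" and eq: "\<Union>\<F>' = \<Union>\<F>"
    using Lindelof[of \<F>] unfolding \<F>_def by blast
  have "(\<Union>B\<in>\<F>'. B) \<in> null_sets M"
  proof (rule null_sets_UN')
    show "B \<in> null_sets M" if "B \<in> \<F>'" for B
      using sub that sets_M unfolding \<F>_def by (auto simp: null_sets_def)
  qed fact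
  moreover have "- measure_support M \<subseteq> \<Union>\<F>"
  proof
    fix t assume "t \<in> - measure_support M"
    then obtain e where "e > 0" "emeasure M (ball t e) = 0"
      unfolding measure_support_def by (auto simp: not_less)
    then show "t \<in> \<Union>\<F>" unfolding \<F>_def by (auto intro!: exI[of _ "ball t e"])
  qed
  ultimately show ?thesis using eq by (intro AE_I'[of "\<Union>\<F>'"]) auto
qed

lemma (in finite_measure) integral_linear_remainder_le:
  fixes k :: "real \<Rightarrow> 'a \<Rightarrow> real"
  assumes meas: "k y \<in> borel_measurable M"
    and int_x: "integrable M (k x)" and int': "integrable M k'"
    and remainder: "AE t in M. \<bar>k y t - k x t - (y - x) * k' t\<bar> \<le> C * (y - x)\<^sup>2"
  shows "\<bar>(\<integral>t. k y t \<partial>M) - (\<integral>t. k x t \<partial>M) - (y - x) * (\<integral>t. k' t \<partial>M)\<bar>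
           \<le> C * measure M (space M) * (y - x)\<^sup>2"
proof -
  have int_y: "integrable M (k y)"
  proof (rule Bochner_Integration.integrable_bound)
    show "integrable M (\<lambda>t. \<bar>k x t\<bar> + \<bar>y - x\<bar> * \<bar>k' t\<bar> + C * (y - x)\<^sup>2)"
      using int_x int' by auto
    show "AE t in M. norm (k y t) \<le> norm (\<bar>k x t\<bar> + \<bar>y - x\<bar> * \<bar>k' t\<bar> + C * (y - x)\<^sup>2)"
      using remainder by eventually_elim (simp only: real_norm_def flip: abs_mult; arith)
  qed (rule meas)
  have "(\<integral>t. k y t \<partial>M) - (\<integral>t. k x t \<partial>M) - (y - x) * (\<integral>t. k' t \<partial>M)
      = (\<integral>t. k y t - k x t - (y - x) * k' t \<partial>M)"
    using int_x int_y int' by simp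
  also have "\<bar>\<dots>\<bar> \<le> (\<integral>t. \<bar>k y t - k x t - (y - x) * k' t\<bar> \<partial>M)"
    by (rule integral_abs_bound)
  also have "\<dots> \<le> (\<integral>t. C * (y - x)\<^sup>2 \<partial>M)"
    using remainder int_x int_y int' by (intro integral_mono_AE) auto
  finally show ?thesis
    by (simp add: mult_ac)
qed

lemma has_real_derivative_integral:
  fixes k :: "real \<Rightarrow> 'a \<Rightarrow> real"
  assumes "finite_measure M" and "0 < \<delta>"
    and meas: "\<And>y. k y \<in> borel_measurable M"
    and int_x: "integrable M (k x)" and int': "integrable M k'"
    and remainder: "AE t in M. \<forall>y. \<bar>y - x\<bar> < \<delta> \<longrightarrow>
                      \<bar>k y t - k x t - (y - x) * k' t\<bar> \<le> C * (y - x)\<^sup>2"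
  shows "((\<lambda>y. \<integral>t. k y t \<partial>M) has_real_derivative (\<integral>t. k' t \<partial>M)) (at x)"
proof -
  interpret finite_measure M by fact
  define F where "F y = (\<integral>t. k y t \<partial>M)" for y
  define D where "D = (\<integral>t. k' t \<partial>M)"
  define K where "K = C * measure M (space M)"
  have F_remainder: "\<bar>F y - F x - (y - x) * D\<bar> \<le> K * (y - x)\<^sup>2" if "\<bar>y - x\<bar> < \<delta>" for y
    unfolding F_def D_def K_def
    using remainder that by (intro integral_linear_remainder_le meas int_x int') auto
  have "((\<lambda>y. (F y - F x) / (y - x) - D) \<longlongrightarrow> 0) (at x)"
  proof (rule Lim_null_comparison)
    show "\<forall>\<^sub>F y in at x. norm ((F y - F x) / (y - x) - D) \<le> K * \<bar>y - x\<bar>"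
      unfolding eventually_at
    proof (intro exI[of _ \<delta>] conjI ballI impI)
      fix y assume "y \<in> UNIV" "y \<noteq> x \<and> dist y x < \<delta>"
      then have "y \<noteq> x" "\<bar>y - x\<bar> < \<delta>" by (auto simp: dist_real_def)
      then have "\<bar>F y - F x - (y - x) * D\<bar> / \<bar>y - x\<bar> \<le> K * (y - x)\<^sup>2 / \<bar>y - x\<bar>"
        by (intro divide_right_mono F_remainder) auto
      moreover have "(F y - F x) / (y - x) - D = (F y - F x - (y - x) * D) / (y - x)"
        using \<open>y \<noteq> x\<close> by (simp add: field_simps)
      moreover have "K * (y - x)\<^sup>2 / \<bar>y - x\<bar> = K * \<bar>y - x\<bar>"
        using \<open>y \<noteq> x\<close> by (simp add: power2_eq_square field_simps)
      ultimately show "norm ((F y - F x) / (y - x) - D) \<le> K * \<bar>y - x\<bar>"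
        by simp
    qed (fact \<open>0 < \<delta>\<close>)
    show "((\<lambda>y. K * \<bar>y - x\<bar>) \<longlongrightarrow> 0) (at x)"
      by (intro tendsto_eq_intros) auto
  qed
  then show ?thesis
    by (simp add: has_field_derivative_iff LIM_zero_iff F_def D_def)
qed

lemma inverse_remainder_le:
  fixes u v \<delta> :: real
  assumes "0 < \<delta>" "\<delta> \<le> u" "\<delta> \<le> v"
  shows "\<bar>1/v - 1/u + (v - u) / u\<^sup>2\<bar> \<le> (v - u)\<^sup>2 / \<delta>^3"
proof -
  have "1/v - 1/u + (v - u) / u\<^sup>2 = (v - u)\<^sup>2 / (u\<^sup>2 * v)"
    using assms by (simp add: field_simps power2_eq_square)
  moreover have "\<delta>\<^sup>2 * \<delta> \<le> u\<^sup>2 * v"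
    by (rule mult_mono) (use assms in \<open>auto intro: power_mono\<close>)
  then have "\<delta>^3 \<le> u\<^sup>2 * v"
    by (simp add: eval_nat_numeral)
  ultimately show ?thesis
    using assms by (simp add: divide_left_mono)
qed

lemma inverse_square_remainder_le:
  fixes u v \<delta> :: real
  assumes "0 < \<delta>" "\<delta> \<le> u" "\<delta> \<le> v"
  shows "\<bar>1/v\<^sup>2 - 1/u\<^sup>2 + 2 * (v - u) / u^3\<bar> \<le> 3 * (v - u)\<^sup>2 / \<delta>^4"
proof -
  define w where "w = 2 / (u^3 * v) + 1 / (u\<^sup>2 * v\<^sup>2)"
  have "1/v\<^sup>2 - 1/u\<^sup>2 + 2 * (v - u) / u^3 = (v - u)\<^sup>2 * w"
    using assms by (simp add: w_def field_simps power2_eq_square power3_eq_cube)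
  moreover have "0 \<le> w" "w \<le> 3 / \<delta>^4"
  proof -
    have "\<delta>^3 * \<delta> \<le> u^3 * v" "\<delta>\<^sup>2 * \<delta>\<^sup>2 \<le> u\<^sup>2 * v\<^sup>2"
      by (rule mult_mono; use assms in \<open>auto intro: power_mono\<close>)+
    then have "\<delta>^4 \<le> u^3 * v" "\<delta>^4 \<le> u\<^sup>2 * v\<^sup>2"
      by (simp_all add: eval_nat_numeral)
    then have "2 / (u^3 * v) \<le> 2 / \<delta>^4" "1 / (u\<^sup>2 * v\<^sup>2) \<le> 1 / \<delta>^4"
      using assms by (auto intro!: divide_left_mono)
    then show "w \<le> 3 / \<delta>^4" by (simp add: w_def)
    show "0 \<le> w" using assms by (simp add: w_def)
  qed
  ultimately show ?thesis
    using mult_left_mono[of w "3 / \<delta>^4" "(v - u)\<^sup>2"] by (simp add: ac_simps)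
qed

lemma partial_fractions:
  fixes y t :: real
  assumes "\<bar>t\<bar> < y"
  shows "y / (y\<^sup>2 - t\<^sup>2) = (1/(y - t) + 1/(y + t)) / 2"
    and "(y\<^sup>2 + t\<^sup>2) / (y\<^sup>2 - t\<^sup>2)\<^sup>2 = (1/(y - t)\<^sup>2 + 1/(y + t)\<^sup>2) / 2"
proof -
  have "y - t \<noteq> 0" "y + t \<noteq> 0"
    using assms by auto
  moreover from this have "y\<^sup>2 - t\<^sup>2 \<noteq> 0"
    by (simp add: power2_eq_square square_diff_square_factored)
  ultimately show "y / (y\<^sup>2 - t\<^sup>2) = (1/(y - t) + 1/(y + t)) / 2"
    and "(y\<^sup>2 + t\<^sup>2) / (y\<^sup>2 - t\<^sup>2)\<^sup>2 = (1/(y - t)\<^sup>2 + 1/(y + t)\<^sup>2) / 2"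
    by (simp_all add: divide_simps) (simp_all add: algebra_simps power2_eq_square)
qed

lemma kernel_remainder_le:
  fixes x y t \<delta> :: real
  assumes "0 < \<delta>" "0 \<le> t" "\<delta> \<le> x - t" "\<delta> \<le> y - t"
  shows "\<bar>y / (y\<^sup>2 - t\<^sup>2) - x / (x\<^sup>2 - t\<^sup>2) - (y - x) * - ((x\<^sup>2 + t\<^sup>2) / (x\<^sup>2 - t\<^sup>2)\<^sup>2)\<bar>
           \<le> (y - x)\<^sup>2 / \<delta>^3"
    and "\<bar>(y\<^sup>2 + t\<^sup>2) / (y\<^sup>2 - t\<^sup>2)\<^sup>2 - (x\<^sup>2 + t\<^sup>2) / (x\<^sup>2 - t\<^sup>2)\<^sup>2
            - (y - x) * - (1 / (x - t)^3 + 1 / (x + t)^3)\<bar>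
           \<le> 3 * (y - x)\<^sup>2 / \<delta>^4"
proof -
  have x: "\<bar>t\<bar> < x" and y: "\<bar>t\<bar> < y" and sums: "\<delta> \<le> x + t" "\<delta> \<le> y + t"
    using assms by auto
  have half_sums:
    "(p + q)/2 - (r + s)/2 - h * - ((1/A + 1/C)/2) = ((p - r + h/A) + (q - s + h/C))/2"
    "(p + q)/2 - (r + s)/2 - h * - (1/A + 1/C) = ((p - r + 2*h/A) + (q - s + 2*h/C))/2"
    for p q r s h A C :: real
    by (simp_all add: field_simps)
  have half_sum_le: "\<bar>(a + c)/2\<bar> \<le> e" if "\<bar>a\<bar> \<le> e" "\<bar>c\<bar> \<le> e" for a c e :: real
    using that unfolding abs_le_iff by (auto simp: field_simps)
  have diffs: "y - t - (x - t) = y - x" "y + t - (x + t) = y - x" by simp_all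
  show "\<bar>y / (y\<^sup>2 - t\<^sup>2) - x / (x\<^sup>2 - t\<^sup>2) - (y - x) * - ((x\<^sup>2 + t\<^sup>2) / (x\<^sup>2 - t\<^sup>2)\<^sup>2)\<bar>
           \<le> (y - x)\<^sup>2 / \<delta>^3"
    unfolding partial_fractions[OF x] partial_fractions[OF y] half_sums
    using inverse_remainder_le[of \<delta> "x - t" "y - t", unfolded diffs]
      inverse_remainder_le[of \<delta> "x + t" "y + t", unfolded diffs] assms sums
    by (intro half_sum_le) auto
  show "\<bar>(y\<^sup>2 + t\<^sup>2) / (y\<^sup>2 - t\<^sup>2)\<^sup>2 - (x\<^sup>2 + t\<^sup>2) / (x\<^sup>2 - t\<^sup>2)\<^sup>2
            - (y - x) * - (1 / (x - t)^3 + 1 / (x + t)^3)\<bar>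
           \<le> 3 * (y - x)\<^sup>2 / \<delta>^4"
    unfolding partial_fractions[OF x] partial_fractions[OF y] half_sums
    using inverse_square_remainder_le[of \<delta> "x - t" "y - t", unfolded diffs]
      inverse_square_remainder_le[of \<delta> "x + t" "y + t", unfolded diffs] assms sums
    by (intro half_sum_le) auto
qed

definition weight :: "real \<Rightarrow> real \<Rightarrow> real" where
  "weight x t = x\<^sup>2 / (x\<^sup>2 - t\<^sup>2)"

lemma kernels_eq_weight:
  fixes x t :: real
  assumes "\<bar>t\<bar> < x"
  shows "x / (x\<^sup>2 - t\<^sup>2) = weight x t / x"
    and "(x\<^sup>2 + t\<^sup>2) / (x\<^sup>2 - t\<^sup>2)\<^sup>2 = (2 * weight x t ^ 2 - weight x t) / x\<^sup>2"
    and "1 / (x - t)^3 + 1 / (x + t)^3 = (8 * weight x t ^ 3 - 6 * weight x t ^ 2) / x^3"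
proof -
  have "x \<noteq> 0" "x - t \<noteq> 0" "x + t \<noteq> 0"
    using assms by auto
  moreover from this have "x\<^sup>2 - t\<^sup>2 \<noteq> 0"
    by (simp add: power2_eq_square square_diff_square_factored)
  ultimately show "x / (x\<^sup>2 - t\<^sup>2) = weight x t / x"
    and "(x\<^sup>2 + t\<^sup>2) / (x\<^sup>2 - t\<^sup>2)\<^sup>2 = (2 * weight x t ^ 2 - weight x t) / x\<^sup>2"
    and "1 / (x - t)^3 + 1 / (x + t)^3 = (8 * weight x t ^ 3 - 6 * weight x t ^ 2) / x^3"
    unfolding weight_def
    by (simp_all add: divide_simps) (simp_all add: algebra_simps eval_nat_numeral)
qed

lemma weight_bounds:
  fixes x t :: real
  assumes "0 \<le> t" "t < x"
  shows "1 \<le> weight x t" and "weight x t \<le> x / (x - t)"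
proof -
  have "0 < x\<^sup>2 - t\<^sup>2" "x\<^sup>2 - t\<^sup>2 \<le> x\<^sup>2"
    using assms by (simp_all add: power_strict_mono)
  then show "1 \<le> weight x t"
    by (simp add: weight_def)
  have "weight x t = x / (x - t) * (x / (x + t))"
    using assms by (simp add: weight_def power2_eq_square square_diff_square_factored)
  also have "\<dots> \<le> x / (x - t) * 1"
    using assms by (intro mult_left_mono) auto
  finally show "weight x t \<le> x / (x - t)" by simp
qed

text \<open>At x, P, C and E are x phi(x;s), -x^2 phi'(x;s) and x^3 phi''(x;s) written in the moments
  m_1, m_2, m_3; the value is the quotient-rule derivative of T2.\<close>
definition T2_slope :: "real \<Rightarrow> real \<Rightarrow> real \<Rightarrow> real \<Rightarrow> real \<Rightarrow> real" where
  "T2_slope x m1 m2 m3 s =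
     (let P = s * m1 + 1 - s;
          C = s * (2 * m2 - m1) + 1 - s;
          E = s * (8 * m3 - 6 * m2) + 2 * (1 - s)
      in (E * P * m1 - C * (C * m1 + P * (2 * m2 - m1))) / (x * P\<^sup>2 * m1\<^sup>2))"

text \<open>Stated in the shape produced by \<open>DERIV_quotient\<close> and \<open>DERIV_mult\<close>.\<close>
lemma quotient_rule_rescaled:
  fixes x P a C c E :: real
  assumes "x \<noteq> 0" "P \<noteq> 0" "a \<noteq> 0"
  shows "(E / x^3 * (P / x * (a / x)) - (- C / x\<^sup>2 * (a / x) + - c / x\<^sup>2 * (P / x)) * (- C / x\<^sup>2))
           / (P / x * (a / x)) ^ Suc (Suc 0)
         = (E * P * a - C * (C * a + P * c)) / (x * P\<^sup>2 * a\<^sup>2)"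
  using assms by (simp add: field_simps eval_nat_numeral)

lemma T2_slope_mono:
  fixes x m1 m2 m3 q :: real
  assumes "0 < x" "1 \<le> m1" "m1 \<le> m2" "m2\<^sup>2 \<le> m1 * m3" "0 \<le> q" "q \<le> 1"
  shows "T2_slope x m1 m2 m3 0 \<le> T2_slope x m1 m2 m3 q"
proof -
  define P where "P = q * m1 + 1 - q"
  define N where "N = 2 * m1 * m3 - m1 * m2 - m2\<^sup>2"
  define S where "S = 2 * m1 * m3 + m1 * m2 - 2 * m2\<^sup>2 - m1\<^sup>2"
  have "1 \<le> P"
    using assms mult_left_mono[of 1 m1 q] by (simp add: P_def)
  have "m1 * m2 \<le> m2 * m2" "m1 * m1 \<le> m1 * m2" "m2 * m2 \<le> m1 * m3"
    using assms by (auto simp: power2_eq_square intro: mult_right_mono mult_left_mono)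
  then have "0 \<le> N" "0 \<le> S"
    unfolding N_def S_def power2_eq_square by linarith+
  define C where "C = q * (2 * m2 - m1) + 1 - q"
  define E where "E = q * (8 * m3 - 6 * m2) + 2 * (1 - q)"
  have "T2_slope x m1 m2 m3 q - T2_slope x m1 m2 m3 0
      = (E * P * m1 - C * (C * m1 + P * (2 * m2 - m1))) / (x * P\<^sup>2 * m1\<^sup>2)
        - P\<^sup>2 * (2 * m1 - 2 * m2) / (x * P\<^sup>2 * m1\<^sup>2)"
    using assms \<open>1 \<le> P\<close> by (simp add: T2_slope_def Let_def P_def C_def E_def power2_eq_square)
  also have "\<dots> = 4 * q * ((1 - q) * N + q * m1 * S) / (x * P\<^sup>2 * m1\<^sup>2)"
    unfolding diff_divide_distrib[symmetric] P_def C_def E_def N_def S_def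
    by (simp add: algebra_simps power2_eq_square)
  finally have "T2_slope x m1 m2 m3 q - T2_slope x m1 m2 m3 0
      = 4 * q * ((1 - q) * N + q * m1 * S) / (x * P\<^sup>2 * m1\<^sup>2)" .
  moreover have "0 \<le> 4 * q * ((1 - q) * N + q * m1 * S) / (x * P\<^sup>2 * m1\<^sup>2)"
    using assms \<open>0 \<le> N\<close> \<open>0 \<le> S\<close> by simp
  ultimately show ?thesis by simp
qed

lemma (in prob_space) moment_inequalities_if_ge_one:
  fixes p :: "'a \<Rightarrow> real"
  assumes ge_one: "AE t in M. 1 \<le> p t"
    and int: "integrable M p" "integrable M (\<lambda>t. p t ^ 2)" "integrable M (\<lambda>t. p t ^ 3)"
  shows "1 \<le> expectation p"
    and "expectation p \<le> expectation (\<lambda>t. p t ^ 2)"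
    and "(expectation (\<lambda>t. p t ^ 2))\<^sup>2 \<le> expectation p * expectation (\<lambda>t. p t ^ 3)"
proof -
  define m1 m2 m3 where "m1 = expectation p" and "m2 = expectation (\<lambda>t. p t ^ 2)"
    and "m3 = expectation (\<lambda>t. p t ^ 3)"
  have "expectation (\<lambda>_. 1) \<le> m1"
    unfolding m1_def using ge_one int by (intro integral_mono_AE) auto
  then show "1 \<le> expectation p"
    by (simp add: m1_def prob_space)
  have "AE t in M. p t \<le> p t ^ 2"
    using ge_one by eventually_elim (simp add: power2_eq_square)
  then show "expectation p \<le> expectation (\<lambda>t. p t ^ 2)"
    using int by (intro integral_mono_AE) auto
  \<comment> \<open>Cauchy-Schwarz, from \<open>0 \<le> E[p (p - m2/m1)^2]\<close>\<close>
  define l where "l = m2 / m1"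
  have "AE t in M. 0 \<le> p t ^ 3 - 2 * l * p t ^ 2 + l\<^sup>2 * p t"
    using ge_one
  proof eventually_elim
    fix t assume "1 \<le> p t"
    then have "0 \<le> p t * (p t - l)\<^sup>2" by simp
    also have "\<dots> = p t ^ 3 - 2 * l * p t ^ 2 + l\<^sup>2 * p t"
      by (simp add: algebra_simps power2_eq_square power3_eq_cube)
    finally show "0 \<le> p t ^ 3 - 2 * l * p t ^ 2 + l\<^sup>2 * p t" .
  qed
  then have "0 \<le> expectation (\<lambda>t. p t ^ 3 - 2 * l * p t ^ 2 + l\<^sup>2 * p t)"
    by (rule integral_nonneg_AE)
  also have "\<dots> = m3 - 2 * l * m2 + l\<^sup>2 * m1"
    using int by (simp add: m1_def m2_def m3_def)
  also have "\<dots> = (m1 * m3 - m2\<^sup>2) / m1"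
    using \<open>1 \<le> expectation p\<close> by (simp add: l_def m1_def field_simps power2_eq_square)
  finally show "(expectation (\<lambda>t. p t ^ 2))\<^sup>2 \<le> expectation p * expectation (\<lambda>t. p t ^ 3)"
    using \<open>1 \<le> expectation p\<close> by (simp add: m1_def m2_def m3_def zero_le_divide_iff)
qed

definition weight_moment :: "real measure \<Rightarrow> real \<Rightarrow> nat \<Rightarrow> real" where
  "weight_moment M x k = (\<integral>t. weight x t ^ k \<partial>M)"

locale prob_on_interval = prob_space M for M :: "real measure" +
  fixes b :: real
  assumes sets_M [measurable_cong]: "sets M = sets borel"
    and AE_in_interval: "AE t in M. 0 \<le> t \<and> t \<le> b"
begin

lemma bound_nonneg: "0 \<le> b"
proof (rule ccontr)
  assume "\<not> 0 \<le> b"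
  have "AE t in M. False"
    using AE_in_interval by eventually_elim (use \<open>\<not> 0 \<le> b\<close> in auto)
  then show False by simp
qed

context
  fixes x :: real
  assumes beyond: "b < x"
begin

lemma x_pos: "0 < x"
  using beyond bound_nonneg by simp

lemma AE_weight_bounds: "AE t in M. 1 \<le> weight x t \<and> weight x t \<le> x / (x - b)"
  using AE_in_interval
proof eventually_elim
  fix t assume t: "0 \<le> t \<and> t \<le> b"
  then have "x / (x - t) \<le> x / (x - b)"
    using beyond by (intro divide_left_mono mult_pos_pos) auto
  with t beyond weight_bounds[of t x] show "1 \<le> weight x t \<and> weight x t \<le> x / (x - b)"
    by auto
qed

lemma integrable_weight_power: "integrable M (\<lambda>t. weight x t ^ k)"
proof (rule integrable_const_bound)
  show "AE t in M. norm (weight x t ^ k) \<le> (x / (x - b)) ^ k"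
    using AE_weight_bounds by eventually_elim (auto intro: power_mono)
qed (simp add: weight_def)

lemma weight_moment_inequalities:
  "1 \<le> weight_moment M x 1"
  "weight_moment M x 1 \<le> weight_moment M x 2"
  "(weight_moment M x 2)\<^sup>2 \<le> weight_moment M x 1 * weight_moment M x 3"
  using moment_inequalities_if_ge_one[of "weight x"] AE_weight_bounds integrable_weight_power[of 1]
    integrable_weight_power[of 2] integrable_weight_power[of 3]
  by (auto simp: weight_moment_def)

lemma kernel_integrals:
  "has_bochner_integral M (\<lambda>t. x / (x\<^sup>2 - t\<^sup>2)) (weight_moment M x 1 / x)"
  "has_bochner_integral M (\<lambda>t. (x\<^sup>2 + t\<^sup>2) / (x\<^sup>2 - t\<^sup>2)\<^sup>2)
     ((2 * weight_moment M x 2 - weight_moment M x 1) / x\<^sup>2)"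
  "has_bochner_integral M (\<lambda>t. 1 / (x - t)^3 + 1 / (x + t)^3)
     ((8 * weight_moment M x 3 - 6 * weight_moment M x 2) / x^3)"
proof -
  have AE_kernels_eq_weight:
    "AE t in M. x / (x\<^sup>2 - t\<^sup>2) = weight x t / x
       \<and> (x\<^sup>2 + t\<^sup>2) / (x\<^sup>2 - t\<^sup>2)\<^sup>2 = (2 * weight x t ^ 2 - weight x t) / x\<^sup>2
       \<and> 1 / (x - t)^3 + 1 / (x + t)^3 = (8 * weight x t ^ 3 - 6 * weight x t ^ 2) / x^3"
    using AE_in_interval by eventually_elim (use beyond in \<open>simp add: kernels_eq_weight\<close>)
  have moment: "has_bochner_integral M (\<lambda>t. weight x t ^ k) (weight_moment M x k)" for k
    using integrable_weight_power by (simp add: weight_moment_def has_bochner_integral_iff)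
  show "has_bochner_integral M (\<lambda>t. x / (x\<^sup>2 - t\<^sup>2)) (weight_moment M x 1 / x)"
    using moment[of 1] AE_kernels_eq_weight
    by (subst has_bochner_integral_cong_AE) auto
  show "has_bochner_integral M (\<lambda>t. (x\<^sup>2 + t\<^sup>2) / (x\<^sup>2 - t\<^sup>2)\<^sup>2)
      ((2 * weight_moment M x 2 - weight_moment M x 1) / x\<^sup>2)"
    using moment[of 1] moment[of 2] AE_kernels_eq_weight
    by (subst has_bochner_integral_cong_AE) (auto intro!: has_bochner_integral_diff)
  show "has_bochner_integral M (\<lambda>t. 1 / (x - t)^3 + 1 / (x + t)^3)
      ((8 * weight_moment M x 3 - 6 * weight_moment M x 2) / x^3)"
    using moment[of 2] moment[of 3] AE_kernels_eq_weight
    by (subst has_bochner_integral_cong_AE) (auto intro!: has_bochner_integral_diff)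
qed

lemma AE_window:
  assumes "0 < \<delta>" "2 * \<delta> \<le> x - b"
  shows "AE t in M. \<forall>y. \<bar>y - x\<bar> < \<delta> \<longrightarrow> 0 \<le> t \<and> \<delta> \<le> x - t \<and> \<delta> \<le> y - t"
  using AE_in_interval by eventually_elim (use assms in \<open>auto simp: abs_less_iff\<close>)

lemma integral_kernel_has_derivative:
  "((\<lambda>y. \<integral>t. y / (y\<^sup>2 - t\<^sup>2) \<partial>M) has_real_derivative
      - (\<integral>t. (x\<^sup>2 + t\<^sup>2) / (x\<^sup>2 - t\<^sup>2)\<^sup>2 \<partial>M)) (at x)"
proof -
  define \<delta> where "\<delta> = (x - b) / 2"
  have \<delta>: "0 < \<delta>" "2 * \<delta> \<le> x - b"
    using beyond by (simp_all add: \<delta>_def)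
  have "((\<lambda>y. \<integral>t. y / (y\<^sup>2 - t\<^sup>2) \<partial>M) has_real_derivative
      (\<integral>t. - ((x\<^sup>2 + t\<^sup>2) / (x\<^sup>2 - t\<^sup>2)\<^sup>2) \<partial>M)) (at x)"
  proof (rule has_real_derivative_integral[where \<delta> = \<delta> and C = "1 / \<delta>^3"])
    show "AE t in M. \<forall>y. \<bar>y - x\<bar> < \<delta> \<longrightarrow> \<bar>y / (y\<^sup>2 - t\<^sup>2) - x / (x\<^sup>2 - t\<^sup>2)
            - (y - x) * - ((x\<^sup>2 + t\<^sup>2) / (x\<^sup>2 - t\<^sup>2)\<^sup>2)\<bar> \<le> 1 / \<delta>^3 * (y - x)\<^sup>2"
      using AE_window[OF \<delta>] by eventually_elim (use \<delta> kernel_remainder_le(1) in simp)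
  qed (use \<delta> integrable.intros[OF kernel_integrals(1)]
      integrable_minus[OF integrable.intros[OF kernel_integrals(2)]] finite_measure_axioms in auto)
  then show ?thesis
    by (simp only: integral_minus)
qed

lemma integral_kernel_derivative_has_derivative:
  "((\<lambda>y. \<integral>t. (y\<^sup>2 + t\<^sup>2) / (y\<^sup>2 - t\<^sup>2)\<^sup>2 \<partial>M) has_real_derivative
      - (\<integral>t. 1 / (x - t)^3 + 1 / (x + t)^3 \<partial>M)) (at x)"
proof -
  define \<delta> where "\<delta> = (x - b) / 2"
  have \<delta>: "0 < \<delta>" "2 * \<delta> \<le> x - b"
    using beyond by (simp_all add: \<delta>_def)
  have "((\<lambda>y. \<integral>t. (y\<^sup>2 + t\<^sup>2) / (y\<^sup>2 - t\<^sup>2)\<^sup>2 \<partial>M) has_real_derivative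
      (\<integral>t. - (1 / (x - t)^3 + 1 / (x + t)^3) \<partial>M)) (at x)"
  proof (rule has_real_derivative_integral[where \<delta> = \<delta> and C = "3 / \<delta>^4"])
    show "AE t in M. \<forall>y. \<bar>y - x\<bar> < \<delta> \<longrightarrow>
            \<bar>(y\<^sup>2 + t\<^sup>2) / (y\<^sup>2 - t\<^sup>2)\<^sup>2 - (x\<^sup>2 + t\<^sup>2) / (x\<^sup>2 - t\<^sup>2)\<^sup>2
              - (y - x) * - (1 / (x - t)^3 + 1 / (x + t)^3)\<bar> \<le> 3 / \<delta>^4 * (y - x)\<^sup>2"
      using AE_window[OF \<delta>] by eventually_elim (use \<delta> kernel_remainder_le(2) in simp)
  qed (use \<delta> integrable.intros[OF kernel_integrals(2)]
      integrable_minus[OF integrable.intros[OF kernel_integrals(3)]] finite_measure_axioms in auto)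
  then show ?thesis
    by (simp only: integral_minus)
qed

lemma phi_mu_has_derivative: "((\<lambda>y. phi_mu M y s) has_real_derivative dphi_mu M x s) (at x)"
proof -
  have "((\<lambda>y. (1 - s) / y) has_real_derivative - ((1 - s) / x\<^sup>2)) (at x)"
    using x_pos by (auto intro!: derivative_eq_intros simp: field_simps power2_eq_square)
  then have "((\<lambda>y. s * (\<integral>t. y / (y\<^sup>2 - t\<^sup>2) \<partial>M) + (1 - s) / y) has_real_derivative
      s * - (\<integral>t. (x\<^sup>2 + t\<^sup>2) / (x\<^sup>2 - t\<^sup>2)\<^sup>2 \<partial>M) + - ((1 - s) / x\<^sup>2)) (at x)"
    by (intro DERIV_add DERIV_cmult integral_kernel_has_derivative)
  then show ?thesis
    unfolding phi_mu_def dphi_mu_def by (rule DERIV_cong) simp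
qed

lemma dphi_mu_has_derivative:
  "((\<lambda>y. dphi_mu M y s) has_real_derivative
      s * (\<integral>t. 1 / (x - t)^3 + 1 / (x + t)^3 \<partial>M) + 2 * (1 - s) / x^3) (at x)"
proof -
  have "((\<lambda>y. (1 - s) / y\<^sup>2) has_real_derivative - (2 * (1 - s) / x^3)) (at x)"
    using x_pos by (auto intro!: derivative_eq_intros simp: field_simps eval_nat_numeral)
  then have "((\<lambda>y. - (s * (\<integral>t. (y\<^sup>2 + t\<^sup>2) / (y\<^sup>2 - t\<^sup>2)\<^sup>2 \<partial>M) + (1 - s) / y\<^sup>2)) has_real_derivative
      - (s * - (\<integral>t. 1 / (x - t)^3 + 1 / (x + t)^3 \<partial>M) + - (2 * (1 - s) / x^3))) (at x)"
    by (intro DERIV_minus DERIV_add DERIV_cmult integral_kernel_derivative_has_derivative)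
  then show ?thesis
    unfolding dphi_mu_def by (rule DERIV_cong) simp
qed

lemma T2_has_derivative:
  assumes "0 \<le> s" "s \<le> 1"
  shows "((\<lambda>y. T2 M y s) has_real_derivative
           T2_slope x (weight_moment M x 1) (weight_moment M x 2) (weight_moment M x 3) s) (at x)"
proof -
  define m1 m2 m3
    where "m1 = weight_moment M x 1" and "m2 = weight_moment M x 2" and "m3 = weight_moment M x 3"
  have "1 \<le> m1"
    using weight_moment_inequalities by (simp add: m1_def)
  have "1 \<le> s * m1 + 1 - s"
    using assms \<open>1 \<le> m1\<close> mult_left_mono[of 1 m1 s] by simp
  have phi_s: "phi_mu M x s = (s * m1 + 1 - s) / x" and phi_1: "phi_mu M x 1 = m1 / x"
    using kernel_integrals(1)
    by (simp_all add: phi_mu_def has_bochner_integral_iff m1_def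
        add_divide_distrib diff_divide_distrib)
  have dphi_s: "dphi_mu M x s = - (s * (2 * m2 - m1) + 1 - s) / x\<^sup>2"
    and dphi_1: "dphi_mu M x 1 = - (2 * m2 - m1) / x\<^sup>2"
    using kernel_integrals(2) x_pos
    by (simp_all add: dphi_mu_def has_bochner_integral_iff m1_def m2_def divide_simps)
  have ddphi_s: "s * (\<integral>t. 1 / (x - t)^3 + 1 / (x + t)^3 \<partial>M) + 2 * (1 - s) / x^3
      = (s * (8 * m3 - 6 * m2) + 2 * (1 - s)) / x^3"
    using kernel_integrals(3)
    by (simp add: has_bochner_integral_iff m2_def m3_def add_divide_distrib)
  have "x \<noteq> 0" "s * m1 + 1 - s \<noteq> 0" "m1 \<noteq> 0"
    using x_pos \<open>1 \<le> m1\<close> \<open>1 \<le> s * m1 + 1 - s\<close> by auto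
  then have "phi_mu M x s * phi_mu M x 1 \<noteq> 0"
    by (simp add: phi_s phi_1)
  from DERIV_quotient[OF dphi_mu_has_derivative[of s]
      DERIV_mult[OF phi_mu_has_derivative phi_mu_has_derivative] this]
  show ?thesis
    unfolding m1_def[symmetric] m2_def[symmetric] m3_def[symmetric]
      T2_def phi_s phi_1 dphi_s dphi_1 ddphi_s
    by (simp only: quotient_rule_rescaled[OF \<open>x \<noteq> 0\<close> \<open>s * m1 + 1 - s \<noteq> 0\<close> \<open>m1 \<noteq> 0\<close>]
        T2_slope_def Let_def)
qed

end

end

theorem mainTheorem13:
  fixes M :: "real measure" and b x q :: real
  assumes "prob_space M"
    and "sets M = sets borel"
    and "bounded (measure_support M)"
    and "measure_support M \<subseteq> {0..}"
    and "b = Sup (measure_support M)"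
    and "x > b"
    and "q \<in> {0..1}"
  shows "deriv (\<lambda>y. T2 M y q) x \<ge> deriv (\<lambda>y. T2 M y 0) x"
proof -
  have "AE t in M. 0 \<le> t \<and> t \<le> b"
    using AE_in_measure_support[OF assms(2)]
  proof eventually_elim
    fix t assume "t \<in> measure_support M"
    then show "0 \<le> t \<and> t \<le> b"
      using assms(3-5) by (auto intro: cSup_upper bounded_imp_bdd_above)
  qed
  with assms(1,2) interpret prob_on_interval M b
    by (simp add: prob_on_interval_def prob_on_interval_axioms_def)
  have slope: "deriv (\<lambda>y. T2 M y s) x
      = T2_slope x (weight_moment M x 1) (weight_moment M x 2) (weight_moment M x 3) s"
    if "0 \<le> s" "s \<le> 1" for s
    using T2_has_derivative[OF \<open>b < x\<close> that] by (rule DERIV_imp_deriv)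
  have "0 < x" "0 \<le> q" "q \<le> 1"
    using x_pos[OF \<open>b < x\<close>] assms(7) by auto
  then show ?thesis
    using slope[of 0] slope[of q] T2_slope_mono[OF _ weight_moment_inequalities[OF \<open>b < x\<close>]]
    by simp
qed

end
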